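(* Let $\mathcal{F}$ be the class of endogenous subgroups models with $k$ components whose component densities belong to an exponential family $\{h(x)\exp(\langle\theta,T(x)\rangle-A(\theta)):\theta\in\Theta\}$. Then $\mathcal{H}=\{x\mapsto\frac{f(1\mid x)}{f(j\mid x)}: j\in[k], f\in\mathcal{F}\}$ satisfies ${\mathrm{Pdim}}(\mathcal{H})\le\dim(T(x))+1$.
   Context: An endogenous subgroups model $f$ with $k$ components has mixing weights $w_1,\dots,w_k$ and component densities $f(x\mid g)$; $f(g\mid x)=\frac{w_gf(x\mid g)}{\sum_{j\in[k]}w_jf(x\mid j)}$. $T(x)$ is the sufficient statistic of the exponential family. ${\mathrm{Pdim}}$ of a real-valued class is the VC dimension of the class of thresholded functions $x\mapsto\mathrm{sgn}(h(x)-r)$, $r\in\mathbb{R}$. *)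

theory Defs
  imports "HOL-Analysis.Analysis" "HOL-Library.Extended_Nat"
begin

definition shatters :: "'a set set \<Rightarrow> 'a set \<Rightarrow> bool" where
  "shatters C S \<longleftrightarrow> (\<forall>B \<subseteq> S. \<exists>c \<in> C. c \<inter> S = B)"

definition vc_dim :: "'a set set \<Rightarrow> enat" where
  "vc_dim C = Sup {enat (card S) | S. finite S \<and> shatters C S}"

text \<open>Pseudo-dimension: VC dimension of the thresholded class
  (x, r) \<mapsto> sgn(h x - r), with sign +1 read as h x \<ge> r.\<close>
definition pdim :: "('a \<Rightarrow> real) set \<Rightarrow> enat" where
  "pdim H = vc_dim ((\<lambda>h. {(x, r). h x \<ge> r}) ` H)"

definition ef_density ::
  "('x \<Rightarrow> real) \<Rightarrow> ('x \<Rightarrow> 'd::euclidean_space) \<Rightarrow> ('d \<Rightarrow> real) \<Rightarrow> 'd \<Rightarrow> 'x \<Rightarrow> real" where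
  "ef_density hb T A \<theta> x = hb x * exp (\<theta> \<bullet> T x - A \<theta>)"

definition posterior ::
  "('x \<Rightarrow> real) \<Rightarrow> ('x \<Rightarrow> 'd::euclidean_space) \<Rightarrow> ('d \<Rightarrow> real) \<Rightarrow> nat \<Rightarrow>
   (nat \<Rightarrow> real) \<Rightarrow> (nat \<Rightarrow> 'd) \<Rightarrow> nat \<Rightarrow> 'x \<Rightarrow> real" where
  "posterior hb T A k w th g x =
     w g * ef_density hb T A (th g) x / (\<Sum>j\<in>{1..k}. w j * ef_density hb T A (th j) x)"

definition esm_class :: "('d::euclidean_space) set \<Rightarrow> nat \<Rightarrow> ((nat \<Rightarrow> real) \<times> (nat \<Rightarrow> 'd)) set" where
  "esm_class \<Theta> k = {(w, th). (\<forall>j\<in>{1..k}. w j \<ge> 0) \<and> (\<Sum>j\<in>{1..k}. w j) = 1 \<and> (\<forall>j\<in>{1..k}. th j \<in> \<Theta>)}"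

end

theory Submission
  imports Defs
begin

(* On the set where hb is positive, the ratio f(1 | x) / f(j | x) equals
   (w 1 / w j) exp (<th 1 - th j, T x> + A (th j) - A (th 1)), and it vanishes elsewhere.
   A point (x, r) of a shattered set therefore has hb x > 0 and r > 0, and every nonempty
   pattern on it is cut out by an affine threshold ln r <= <v, T x> + b.  If the set had
   DIM + 2 points, an affine dependence sum l_p T x_p = 0, sum l_p = 0 among the T x_p
   (Radon) would make the patterns {l > 0} and {l < 0} incompatible. *)

lemma shatters_mono: "shatters C S \<Longrightarrow> C \<subseteq> D \<Longrightarrow> shatters D S"
  unfolding shatters_def by blast

lemma vc_dim_mono: "C \<subseteq> D \<Longrightarrow> vc_dim C \<le> vc_dim D"
  unfolding vc_dim_def by (rule Sup_subset_mono) (blast intro: shatters_mono)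

lemma pdim_mono: "H \<subseteq> G \<Longrightarrow> pdim H \<le> pdim G"
  unfolding pdim_def by (intro vc_dim_mono image_mono)

lemma vc_dim_le:
  assumes "\<And>S. finite S \<Longrightarrow> shatters C S \<Longrightarrow> card S \<le> n"
  shows "vc_dim C \<le> enat n"
  unfolding vc_dim_def using assms by (auto intro!: Sup_least)

lemma shatters_subgraphsE:
  assumes "shatters ((\<lambda>h. {(x, r). h x \<ge> r}) ` H) S" and "B \<subseteq> S"
  obtains h where "h \<in> H" and "\<forall>q\<in>S. q \<in> B \<longleftrightarrow> snd q \<le> h (fst q)"
proof -
  obtain c where "c \<in> (\<lambda>h. {(x, r). h x \<ge> r}) ` H" and "c \<inter> S = B"
    using assms(1)[unfolded shatters_def, rule_format, OF assms(2)] by blast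
  then obtain h where "h \<in> H" and hB: "{(x, r). h x \<ge> r} \<inter> S = B" by blast
  moreover have "q \<in> B \<longleftrightarrow> snd q \<le> h (fst q)" if "q \<in> S" for q
    using that hB by (cases q) auto
  ultimately show thesis by (intro that) auto
qed

lemma exists_affine_dependence:
  fixes y :: "'p \<Rightarrow> 'd::euclidean_space"
  assumes fin: "finite S" and card: "DIM('d) + 2 \<le> card S"
  obtains l where "sum l S = 0" and "(\<Sum>p\<in>S. l p *\<^sub>R y p) = 0" and "\<exists>p\<in>S. l p \<noteq> 0"
proof (cases "inj_on y S")
  case False
  then obtain p q where pq: "p \<in> S" "q \<in> S" "p \<noteq> q" "y p = y q"
    unfolding inj_on_def by blast
  define l where "l = (\<lambda>z. if z = p then 1 else if z = q then -1 else (0::real))"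
  have "sum l S = sum l {p, q}"
    using pq fin by (intro sum.mono_neutral_right) (auto simp: l_def)
  moreover have "(\<Sum>z\<in>S. l z *\<^sub>R y z) = (\<Sum>z\<in>{p, q}. l z *\<^sub>R y z)"
    using pq fin by (intro sum.mono_neutral_right) (auto simp: l_def)
  ultimately show thesis
    using pq by (intro that[of l]) (auto simp: l_def)
next
  case True
  have "affine_dependent (y ` S)"
    using affine_dependent_biggerset[of "y ` S"] fin card card_image[OF True] by auto
  then obtain U where "sum U (y ` S) = 0" "\<exists>v\<in>y ` S. U v \<noteq> 0" "(\<Sum>v\<in>y ` S. U v *\<^sub>R v) = 0"
    using affine_dependent_explicit_finite[of "y ` S"] fin by auto
  then show thesis
    by (intro that[of "\<lambda>p. U (y p)"]) (auto simp: sum.reindex[OF True])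
qed

lemma exists_pos_neg_of_sum_eq_0:
  fixes l :: "'p \<Rightarrow> real"
  assumes "finite S" and "sum l S = 0" and "\<exists>p\<in>S. l p \<noteq> 0"
  shows "\<exists>p\<in>S. l p > 0" and "\<exists>p\<in>S. l p < 0"
proof -
  show "\<exists>p\<in>S. l p > 0"
  proof (rule ccontr)
    assume "\<not> ?thesis"
    then have "sum (\<lambda>p. - l p) S = 0 \<longleftrightarrow> (\<forall>p\<in>S. - l p = 0)"
      using assms(1) by (intro sum_nonneg_eq_0_iff) auto
    with assms(2,3) show False by (simp add: sum_negf)
  qed
  show "\<exists>p\<in>S. l p < 0"
  proof (rule ccontr)
    assume "\<not> ?thesis"
    then have "sum l S = 0 \<longleftrightarrow> (\<forall>p\<in>S. l p = 0)"
      using assms(1) by (intro sum_nonneg_eq_0_iff) auto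
    with assms(2,3) show False by simp
  qed
qed

lemma sum_mult_pos_of_sign_agreement:
  fixes l u :: "'p \<Rightarrow> real"
  assumes "finite S" and agree: "\<forall>p\<in>S. l p > 0 \<longleftrightarrow> u p \<ge> 0" and "q \<in> S" and "l q < 0"
  shows "0 < (\<Sum>p\<in>S. l p * u p)"
proof (rule sum_pos2[OF assms(1,3)])
  have "l q > 0 \<longleftrightarrow> u q \<ge> 0" using agree assms(3) by blast
  with assms(4) have "u q < 0" by linarith
  with assms(4) show "0 < l q * u q" by (rule mult_neg_neg)
  show "0 \<le> l p * u p" if "p \<in> S" for p
  proof -
    have "l p > 0 \<longleftrightarrow> u p \<ge> 0" using agree that by blast
    then have "0 \<le> l p \<and> 0 \<le> u p \<or> l p \<le> 0 \<and> u p \<le> 0" by linarith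
    then show ?thesis by (simp only: zero_le_mult_iff)
  qed
qed

lemma sum_affine_dependence_affine_eq_0:
  fixes y :: "'p \<Rightarrow> 'd::real_inner"
  assumes "sum l S = 0" and "(\<Sum>p\<in>S. l p *\<^sub>R y p) = 0"
  shows "(\<Sum>p\<in>S. l p * (v \<bullet> y p + b)) = 0"
proof -
  have "(\<Sum>p\<in>S. l p * (v \<bullet> y p + b)) = v \<bullet> (\<Sum>p\<in>S. l p *\<^sub>R y p) + b * sum l S"
    by (simp add: inner_sum_right sum_distrib_left sum.distrib algebra_simps)
  with assms show ?thesis by simp
qed

lemma card_le_of_affine_threshold_patterns:
  fixes y :: "'p \<Rightarrow> 'd::euclidean_space" and t :: "'p \<Rightarrow> real"
  assumes fin: "finite S"
    and patterns: "\<And>B. B \<subseteq> S \<Longrightarrow> B \<noteq> {} \<Longrightarrow> \<exists>v b. \<forall>p\<in>S. p \<in> B \<longleftrightarrow> t p \<le> v \<bullet> y p + b"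
  shows "card S \<le> DIM('d) + 1"
proof (rule ccontr)
  assume "\<not> ?thesis"
  then have "DIM('d) + 2 \<le> card S" by simp
  then obtain l where l0: "sum l S = 0" and ly: "(\<Sum>p\<in>S. l p *\<^sub>R y p) = 0"
    and nz: "\<exists>p\<in>S. l p \<noteq> 0"
    by (rule exists_affine_dependence[OF fin])
  obtain p0 p1 where p0: "p0 \<in> S" "l p0 > 0" and p1: "p1 \<in> S" "l p1 < 0"
    using exists_pos_neg_of_sum_eq_0[OF fin l0 nz] by blast
  obtain v1 b1 where "\<forall>p\<in>S. p \<in> {p\<in>S. l p > 0} \<longleftrightarrow> t p \<le> v1 \<bullet> y p + b1"
    using patterns[of "{p\<in>S. l p > 0}"] p0 by auto
  then have P: "\<forall>p\<in>S. l p > 0 \<longleftrightarrow> v1 \<bullet> y p + b1 - t p \<ge> 0" by simp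
  obtain v2 b2 where "\<forall>p\<in>S. p \<in> {p\<in>S. l p < 0} \<longleftrightarrow> t p \<le> v2 \<bullet> y p + b2"
    using patterns[of "{p\<in>S. l p < 0}"] p1 by auto
  then have N: "\<forall>p\<in>S. - l p > 0 \<longleftrightarrow> v2 \<bullet> y p + b2 - t p \<ge> 0" by simp
  have "0 < (\<Sum>p\<in>S. l p * (v1 \<bullet> y p + b1 - t p))"
    by (rule sum_mult_pos_of_sign_agreement[OF fin P p1])
  also have "\<dots> = - (\<Sum>p\<in>S. l p * t p)"
    using sum_affine_dependence_affine_eq_0[OF l0 ly, of v1 b1]
    by (simp add: right_diff_distrib sum_subtractf)
  finally have "(\<Sum>p\<in>S. l p * t p) < 0" by simp
  moreover have "0 < (\<Sum>p\<in>S. - l p * (v2 \<bullet> y p + b2 - t p))"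
    by (rule sum_mult_pos_of_sign_agreement[OF fin N p0(1)]) (use p0 in simp)
  moreover have "(\<Sum>p\<in>S. - l p * (v2 \<bullet> y p + b2 - t p)) = (\<Sum>p\<in>S. l p * t p)"
    using sum_affine_dependence_affine_eq_0[OF l0 ly, of v2 b2]
    by (simp add: right_diff_distrib sum_subtractf sum_negf)
  ultimately show False by linarith
qed

definition log_affine_class :: "'x set \<Rightarrow> ('x \<Rightarrow> 'd::euclidean_space) \<Rightarrow> ('x \<Rightarrow> real) set" where
  "log_affine_class X T =
     {\<lambda>x. if x \<in> X then c * exp (v \<bullet> T x + b) else 0 | c v b. c \<ge> 0}"

lemma shattered_by_log_affine_class_in_support:
  assumes sh: "shatters ((\<lambda>h. {(x, r). h x \<ge> r}) ` log_affine_class X T) S" and "q \<in> S"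
  shows "fst q \<in> X" and "snd q > 0"
proof -
  obtain h where h: "h \<in> log_affine_class X T"
    and hS: "\<forall>p\<in>S. p \<in> S - {q} \<longleftrightarrow> snd p \<le> h (fst p)"
    using shatters_subgraphsE[OF sh, of "S - {q}"] by blast
  have "\<not> snd q \<le> h (fst q)" using hS \<open>q \<in> S\<close> by blast
  moreover have "0 \<le> h (fst q)" using h unfolding log_affine_class_def by auto
  ultimately show pos: "snd q > 0" by linarith
  obtain h' where h': "h' \<in> log_affine_class X T"
    and hq: "\<forall>p\<in>S. p \<in> {q} \<longleftrightarrow> snd p \<le> h' (fst p)"
    using shatters_subgraphsE[OF sh, of "{q}"] \<open>q \<in> S\<close> by blast
  have "snd q \<le> h' (fst q)" using hq \<open>q \<in> S\<close> by blast
  with pos have "h' (fst q) \<noteq> 0" by linarith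
  with h' show "fst q \<in> X" unfolding log_affine_class_def by (auto split: if_splits)
qed

lemma shattered_by_log_affine_class_patterns:
  assumes sh: "shatters ((\<lambda>h. {(x, r). h x \<ge> r}) ` log_affine_class X T) S"
    and "B \<subseteq> S" and "B \<noteq> {}"
  shows "\<exists>v b. \<forall>q\<in>S. q \<in> B \<longleftrightarrow> ln (snd q) \<le> v \<bullet> T (fst q) + b"
proof -
  note supp = shattered_by_log_affine_class_in_support[OF sh]
  obtain h where "h \<in> log_affine_class X T" and hB: "\<forall>q\<in>S. q \<in> B \<longleftrightarrow> snd q \<le> h (fst q)"
    using shatters_subgraphsE[OF sh \<open>B \<subseteq> S\<close>] by blast
  then obtain c v b where "c \<ge> 0" and h_eq: "h = (\<lambda>x. if x \<in> X then c * exp (v \<bullet> T x + b) else 0)"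
    unfolding log_affine_class_def by blast
  have h: "h (fst q) = c * exp (v \<bullet> T (fst q) + b)" if "q \<in> S" for q
    using h_eq supp(1)[OF that] by simp
  obtain q0 where "q0 \<in> B" using \<open>B \<noteq> {}\<close> by blast
  with \<open>B \<subseteq> S\<close> hB have "q0 \<in> S" and "snd q0 \<le> h (fst q0)" by auto
  moreover note supp(2)[OF \<open>q0 \<in> S\<close>] h[OF \<open>q0 \<in> S\<close>]
  ultimately have "0 < c * exp (v \<bullet> T (fst q0) + b)" by linarith
  then have "c > 0" by (simp add: zero_less_mult_iff)
  have "snd q \<le> h (fst q) \<longleftrightarrow> ln (snd q) \<le> v \<bullet> T (fst q) + (b + ln c)" if "q \<in> S" for q
  proof -
    have "h (fst q) = exp (v \<bullet> T (fst q) + (b + ln c))"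
      using h[OF that] \<open>c > 0\<close> by (simp add: exp_add)
    then show ?thesis using exp_ln[OF supp(2)[OF that]] exp_le_cancel_iff by metis
  qed
  with hB show ?thesis by blast
qed

theorem pdim_log_affine_class_le:
  fixes T :: "'x \<Rightarrow> 'd::euclidean_space"
  shows "pdim (log_affine_class X T) \<le> enat (DIM('d) + 1)"
  unfolding pdim_def
proof (rule vc_dim_le)
  fix S :: "('x \<times> real) set"
  assume fin: "finite S" and sh: "shatters ((\<lambda>h. {(x, r). h x \<ge> r}) ` log_affine_class X T) S"
  show "card S \<le> DIM('d) + 1"
    by (rule card_le_of_affine_threshold_patterns[OF fin, where y = "\<lambda>q. T (fst q)" and t = "\<lambda>q. ln (snd q)"])
       (simp add: shattered_by_log_affine_class_patterns[OF sh])
qed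

lemma posterior_ratio_in_log_affine_class:
  fixes hb :: "'x \<Rightarrow> real" and T :: "'x \<Rightarrow> 'd::euclidean_space"
  assumes hb: "\<forall>x. hb x \<ge> 0" and wth: "(w, th) \<in> esm_class \<Theta> k" and j: "j \<in> {1..k}"
  shows "(\<lambda>x. posterior hb T A k w th 1 x / posterior hb T A k w th j x)
           \<in> log_affine_class {x. hb x > 0} T"
proof -
  have w0: "\<forall>g\<in>{1..k}. w g \<ge> 0" and w1: "(\<Sum>g\<in>{1..k}. w g) = 1"
    using wth by (auto simp: esm_class_def)
  have "\<not> (\<forall>g\<in>{1..k}. w g = 0)" using w1 by (metis sum.neutral zero_neq_one)
  then obtain g0 where g0: "g0 \<in> {1..k}" "w g0 \<noteq> 0" by blast
  with w0 have "w g0 > 0" by (simp add: order.not_eq_order_implies_strict)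
  let ?e = "\<lambda>g x. ef_density hb T A (th g) x"
  \<comment> \<open>if \<open>w j = 0\<close>, the ratio is \<open>0\<close> by the convention \<open>x / 0 = 0\<close>, and so is \<open>c\<close>\<close>
  define c where "c = w 1 / w j"
  define v where "v = th 1 - th j"
  define b where "b = A (th j) - A (th 1)"
  have "posterior hb T A k w th 1 x / posterior hb T A k w th j x
          = (if hb x > 0 then c * exp (v \<bullet> T x + b) else 0)" for x
  proof (cases "hb x > 0")
    case True
    then have epos: "?e g x > 0" for g by (simp add: ef_density_def)
    have "0 \<le> w g * ?e g x" if "g \<in> {1..k}" for g
      using w0 that epos by (intro mult_nonneg_nonneg) (auto intro: less_imp_le)
    moreover have "0 < w g0 * ?e g0 x" using \<open>w g0 > 0\<close> epos by simp
    ultimately have "(\<Sum>g\<in>{1..k}. w g * ?e g x) > 0"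
      by (intro sum_pos2[OF _ g0(1)]) auto
    then have "posterior hb T A k w th 1 x / posterior hb T A k w th j x
                 = (w 1 * ?e 1 x) / (w j * ?e j x)"
      unfolding posterior_def by (simp add: divide_simps)
    also have "\<dots> = c * (?e 1 x / ?e j x)" unfolding c_def by simp
    also have "?e 1 x / ?e j x = exp (v \<bullet> T x + b)"
      using True unfolding ef_density_def v_def b_def
      by (simp add: exp_diff[symmetric] inner_diff_left algebra_simps)
    finally show ?thesis using True by simp
  next
    case False
    with hb have "hb x = 0" by (simp add: not_less order_antisym)
    then show ?thesis by (simp add: posterior_def ef_density_def)
  qed
  moreover have "c \<ge> 0" unfolding c_def using w0 j by auto
  ultimately show ?thesis
    unfolding log_affine_class_def mem_Collect_eq
    by (intro exI[of _ c] exI[of _ v] exI[of _ b]) (simp add: fun_eq_iff)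
qed

theorem lemma3:
  fixes hb :: "'x \<Rightarrow> real" and T :: "'x \<Rightarrow> 'd::euclidean_space"
    and A :: "'d \<Rightarrow> real" and \<Theta> :: "'d set" and k :: nat
  assumes "\<forall>x. hb x \<ge> 0" and "k \<ge> 1"
  shows "pdim {(\<lambda>x. posterior hb T A k w th 1 x / posterior hb T A k w th j x) | j w th.
               j \<in> {1..k} \<and> (w, th) \<in> esm_class \<Theta> k}
         \<le> enat (DIM('d) + 1)"
proof -
  have "{(\<lambda>x. posterior hb T A k w th 1 x / posterior hb T A k w th j x) | j w th.
           j \<in> {1..k} \<and> (w, th) \<in> esm_class \<Theta> k}
        \<subseteq> log_affine_class {x. hb x > 0} T"
    using posterior_ratio_in_log_affine_class[OF assms(1)] by blast
  then show ?thesis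
    by (rule order_trans[OF pdim_mono pdim_log_affine_class_le])
qed

end
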